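(* Let $(M,d)$ be a compact metric space and $\varphi:M\to M$ continuous, and assume either (C) there is a homeomorphism $\theta$ of $M$ with $\theta\circ\theta=\mathrm{Id}_M$ and $\varphi=\theta\circ\varphi\circ\theta$ (set $\theta_n=\theta$), or (R) $\varphi$ is a homeomorphism and there is a homeomorphism $\theta$ with $\theta\circ\theta=\mathrm{Id}_M$ and $\varphi^{-1}=\theta\circ\varphi\circ\theta$ (set $\theta_n=\theta\circ\varphi^{n-1}$). Then $h_\varphi(\mathbb Q\circ\theta)=h_\varphi(\mathbb Q)$ for every $\mathbb Q\in\mathcal P_\varphi(M)$, and $\mathfrak p_\varphi(\mathcal G\circ\theta)=\mathfrak p_\varphi(\mathcal G)$ for every $\mathcal G\in\mathcal A(M)$, where $\mathcal G\circ\theta=\{G_n\circ\theta_n\}$.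
   Context: $\mathcal P_\varphi(M)$: $\varphi$-invariant Borel probability measures ($\mathbb Q\circ\theta$ is again invariant); $h_\varphi$: Kolmogorov–Sinai entropy. $C(M),B(M)$ continuous/bounded Borel real functions, sup norm; $S_nG=\sum_{k<n}G\circ\varphi^k$; $\mathcal A(M)$: sequences $\{G_n\}\subset B(M)$ with some $\{G^{(k)}\}\subset C(M)$ such that $\lim_k\limsup_nn^{-1}\|G_n-S_nG^{(k)}\|_\infty=0$. $B_n(x,\epsilon)=\{y:d(\varphi^ky,\varphi^kx)<\epsilon,0\le k<n\}$. Topological pressure: $\mathfrak p_\varphi(\mathcal G)=\lim_{\epsilon\downarrow0}\limsup_nn^{-1}\log\inf\{\sum_{x\in E}e^{G_n(x)}:E\text{ finite},\bigcup_{x\in E}B_n(x,\epsilon)=M\}\in(-\infty,+\infty]$. *)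

theory Defs
  imports "HOL-Analysis.Analysis" "HOL-Probability.Probability"
begin

definition invariant_measures :: "('a::topological_space \<Rightarrow> 'a) \<Rightarrow> 'a measure set" where
  "invariant_measures \<phi> =
     {Q. prob_space Q \<and> sets Q = sets borel \<and> \<phi> \<in> measurable Q borel \<and> distr Q borel \<phi> = Q}"

definition fin_partitions :: "'a measure \<Rightarrow> 'a set set set" where
  "fin_partitions Q = {P. finite P \<and> P \<subseteq> sets Q \<and> disjoint P \<and> \<Union>P = space Q}"

definition part_entropy :: "'a measure \<Rightarrow> 'a set set \<Rightarrow> real" where
  "part_entropy Q P =
     - (\<Sum>A\<in>P. if measure Q A = 0 then 0 else measure Q A * ln (measure Q A))"

definition dyn_join :: "('a \<Rightarrow> 'a) \<Rightarrow> 'a set set \<Rightarrow> nat \<Rightarrow> 'a set set" where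
  "dyn_join \<phi> P n = {(\<Inter>k<n. (\<phi> ^^ k) -` (A k)) | A. \<forall>k<n. A k \<in> P}"

definition ks_entropy :: "('a \<Rightarrow> 'a) \<Rightarrow> 'a measure \<Rightarrow> ereal" where
  "ks_entropy \<phi> Q =
     (SUP P\<in>fin_partitions Q. ereal (lim (\<lambda>n. part_entropy Q (dyn_join \<phi> P n) / real n)))"

definition birkhoff_sum :: "('a \<Rightarrow> 'a) \<Rightarrow> nat \<Rightarrow> ('a \<Rightarrow> real) \<Rightarrow> 'a \<Rightarrow> real" where
  "birkhoff_sum \<phi> n g x = (\<Sum>k<n. g ((\<phi> ^^ k) x))"

definition sup_norm :: "('a \<Rightarrow> real) \<Rightarrow> real" where
  "sup_norm f = (SUP x. \<bar>f x\<bar>)"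

definition approx_additive :: "('a::topological_space \<Rightarrow> 'a) \<Rightarrow> (nat \<Rightarrow> 'a \<Rightarrow> real) set" where
  "approx_additive \<phi> =
     {G. (\<forall>n. G n \<in> borel_measurable borel \<and> bounded (range (G n))) \<and>
         (\<exists>Gk :: nat \<Rightarrow> 'a \<Rightarrow> real. (\<forall>k. continuous_on UNIV (Gk k)) \<and>
            ((\<lambda>k. limsup (\<lambda>n. ereal (sup_norm (\<lambda>x. G n x - birkhoff_sum \<phi> n (Gk k) x) / real n)))
               \<longlonglongrightarrow> 0))}"

definition bowen_ball :: "('a::metric_space \<Rightarrow> 'a) \<Rightarrow> nat \<Rightarrow> 'a \<Rightarrow> real \<Rightarrow> 'a set" where
  "bowen_ball \<phi> n x \<epsilon> = {y. \<forall>k<n. dist ((\<phi> ^^ k) y) ((\<phi> ^^ k) x) < \<epsilon>}"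

definition pressure_cover :: "('a::metric_space \<Rightarrow> 'a) \<Rightarrow> (nat \<Rightarrow> 'a \<Rightarrow> real) \<Rightarrow> nat \<Rightarrow> real \<Rightarrow> real" where
  "pressure_cover \<phi> G n \<epsilon> =
     Inf {(\<Sum>x\<in>E. exp (G n x)) | E. finite E \<and> (\<Union>x\<in>E. bowen_ball \<phi> n x \<epsilon>) = UNIV}"

definition top_pressure :: "('a::metric_space \<Rightarrow> 'a) \<Rightarrow> (nat \<Rightarrow> 'a \<Rightarrow> real) \<Rightarrow> ereal" where
  "top_pressure \<phi> G =
     Lim (at_right (0::real))
       (\<lambda>\<epsilon>. limsup (\<lambda>n. ereal (ln (pressure_cover \<phi> G n \<epsilon>) / real n)))"

end

theory Submission
  imports Defs
begin

text \<open>In both cases the involution \<theta> conjugates \<phi> to a map \<psi> (\<psi> = \<phi> in case (C),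
\<psi> = \<phi>^-1 in case (R)). Pulling partitions back by \<theta> turns the \<phi>-refinements of a
partition under the image measure of Q into the \<psi>-refinements of the pulled-back partition
under Q; in case (R) the length-n \<phi>^-1-refinement is the \<phi>^(n-1)-preimage of the length-n
\<phi>-refinement, which has the same entropy because Q is \<phi>-invariant. For the pressure,
uniform continuity of \<theta> shows that \<theta>_n maps (n,\<delta>) Bowen balls into (n,\<epsilon>) Bowen balls
for all n at once (in case (R) the orbit segment is traversed backwards), so \<theta>_n sends
spanning sets weighted by G_n \<circ> \<theta>_n to spanning sets of the same weight for G_n; the inverse
of \<theta>_n gives the reverse inequality.\<close>

lemma continuous_on_funpow:
  "continuous_on UNIV (f :: 'a::topological_space \<Rightarrow> 'a) \<Longrightarrow> continuous_on UNIV (f ^^ k)"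
proof (induction k)
  case (Suc k)
  then have "continuous_on UNIV (f \<circ> (f ^^ k))"
    by (metis continuous_on_compose continuous_on_subset subset_UNIV)
  then show ?case by simp
qed simp

lemma funpow_conjugate:
  assumes "\<And>x. f (t x) = t (g x)"
  shows "(f ^^ k) (t x) = t ((g ^^ k) x)"
  by (induction k) (auto simp: assms)

lemma funpow_left_inverse_cancel:
  assumes "\<And>x. g (f x) = x" and "k \<le> m"
  shows "(g ^^ k) ((f ^^ m) x) = (f ^^ (m - k)) x"
  using assms(2)
proof (induction k)
  case (Suc k)
  then have "(g ^^ Suc k) ((f ^^ m) x) = g ((f ^^ (Suc (m - Suc k))) x)"
    by (simp add: Suc_diff_Suc)
  also have "\<dots> = (f ^^ (m - Suc k)) x" using assms(1) by simp
  finally show ?case .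
qed simp

lemma involution_conjugate:
  assumes "\<And>x. \<theta> (\<theta> x) = x" and "\<psi> = \<theta> \<circ> \<phi> \<circ> \<theta>"
  shows "\<phi> (\<theta> x) = \<theta> (\<psi> x)"
  using assms by simp

subsection \<open>Bowen balls and spanning sets\<close>

lemma open_bowen_ball:
  assumes "continuous_on UNIV \<phi>"
  shows "open (bowen_ball \<phi> n x \<epsilon>)"
proof -
  have "bowen_ball \<phi> n x \<epsilon> = (\<Inter>k\<in>{..<n}. {y. dist ((\<phi> ^^ k) y) ((\<phi> ^^ k) x) < \<epsilon>})"
    unfolding bowen_ball_def by auto
  moreover have "open {y. dist ((\<phi> ^^ k) y) ((\<phi> ^^ k) x) < \<epsilon>}" for k
    by (intro open_Collect_less continuous_intros continuous_on_funpow[OF assms])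
  ultimately show ?thesis by auto
qed

lemma centre_in_bowen_ball: "0 < \<epsilon> \<Longrightarrow> x \<in> bowen_ball \<phi> n x \<epsilon>"
  unfolding bowen_ball_def by auto

lemma bowen_ball_mono: "\<epsilon> \<le> \<epsilon>' \<Longrightarrow> bowen_ball \<phi> n x \<epsilon> \<subseteq> bowen_ball \<phi> n x \<epsilon>'"
  unfolding bowen_ball_def by fastforce

lemma finite_bowen_cover:
  fixes \<phi> :: "'a::metric_space \<Rightarrow> 'a"
  assumes cpt: "compact (UNIV :: 'a set)" and cont: "continuous_on UNIV \<phi>"
    and "0 < \<epsilon>"
  obtains E :: "'a set" where "finite E" "(\<Union>x\<in>E. bowen_ball \<phi> n x \<epsilon>) = UNIV"
proof -
  have "UNIV \<subseteq> (\<Union>x. bowen_ball \<phi> n x \<epsilon>)" using centre_in_bowen_ball[OF \<open>0 < \<epsilon>\<close>] by blast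
  then obtain E where "finite E" "UNIV \<subseteq> (\<Union>x\<in>E. bowen_ball \<phi> n x \<epsilon>)"
    using compactE_image[OF cpt, of UNIV "\<lambda>x. bowen_ball \<phi> n x \<epsilon>"] open_bowen_ball[OF cont]
    by metis
  then show ?thesis using that by blast
qed

definition cover_sums :: "('a::metric_space \<Rightarrow> 'a) \<Rightarrow> (nat \<Rightarrow> 'a \<Rightarrow> real) \<Rightarrow> nat \<Rightarrow> real \<Rightarrow> real set"
  where "cover_sums \<phi> G n \<epsilon> =
    {(\<Sum>x\<in>E. exp (G n x)) | E. finite E \<and> (\<Union>x\<in>E. bowen_ball \<phi> n x \<epsilon>) = UNIV}"

lemma pressure_cover_eq_Inf: "pressure_cover \<phi> G n \<epsilon> = Inf (cover_sums \<phi> G n \<epsilon>)"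
  unfolding pressure_cover_def cover_sums_def ..

lemma cover_sums_nonempty:
  assumes "compact (UNIV :: 'a::metric_space set)" and "continuous_on UNIV \<phi>" and "0 < \<epsilon>"
  shows "cover_sums \<phi> (G :: nat \<Rightarrow> 'a \<Rightarrow> real) n \<epsilon> \<noteq> {}"
proof -
  obtain E where "finite E" "(\<Union>x\<in>E. bowen_ball \<phi> n x \<epsilon>) = UNIV"
    using finite_bowen_cover[OF assms] .
  then have "(\<Sum>x\<in>E. exp (G n x)) \<in> cover_sums \<phi> G n \<epsilon>"
    unfolding cover_sums_def by blast
  then show ?thesis by blast
qed

lemma bdd_below_cover_sums: "bdd_below (cover_sums \<phi> G n \<epsilon>)"
  unfolding cover_sums_def by (rule bdd_belowI[of _ 0]) (auto intro: sum_nonneg)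

lemma pressure_cover_pos:
  assumes cpt: "compact (UNIV :: 'a::metric_space set)" and cont: "continuous_on UNIV \<phi>"
    and "0 < \<epsilon>" and "bounded (range (G n))"
  shows "0 < pressure_cover \<phi> (G :: nat \<Rightarrow> 'a \<Rightarrow> real) n \<epsilon>"
proof -
  obtain B where B: "\<And>x. \<bar>G n x\<bar> \<le> B"
    using \<open>bounded (range (G n))\<close> unfolding bounded_iff by auto
  have "exp (-B) \<le> pressure_cover \<phi> G n \<epsilon>"
    unfolding pressure_cover_eq_Inf
  proof (rule cInf_greatest[OF cover_sums_nonempty[OF cpt cont \<open>0 < \<epsilon>\<close>]])
    fix s assume "s \<in> cover_sums \<phi> G n \<epsilon>"
    then obtain E where E: "finite E" "(\<Union>x\<in>E. bowen_ball \<phi> n x \<epsilon>) = UNIV"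
      and s: "s = (\<Sum>x\<in>E. exp (G n x))"
      unfolding cover_sums_def by blast
    then obtain x0 where "x0 \<in> E" by blast
    have "exp (-B) \<le> exp (G n x0)" using B[of x0] by simp
    also have "\<dots> \<le> s" unfolding s by (rule member_le_sum) (use E \<open>x0 \<in> E\<close> in auto)
    finally show "exp (-B) \<le> s" .
  qed
  then show ?thesis by (rule order.strict_trans2[OF exp_gt_zero])
qed

lemma pressure_cover_le_transport:
  fixes \<phi> \<tau> :: "'a::metric_space \<Rightarrow> 'a"
  assumes cpt: "compact (UNIV :: 'a set)" and cont: "continuous_on UNIV \<phi>" and "0 < \<delta>"
    and "bij \<tau>" and H: "\<And>x. H n x = G n (\<tau> x)"
    and maps: "\<And>x. \<tau> ` bowen_ball \<phi> n x \<delta> \<subseteq> bowen_ball \<phi> n (\<tau> x) \<epsilon>"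
  shows "pressure_cover \<phi> G n \<epsilon> \<le> pressure_cover \<phi> H n \<delta>"
  unfolding pressure_cover_eq_Inf
proof (rule cInf_mono[OF cover_sums_nonempty[OF cpt cont \<open>0 < \<delta>\<close>] bdd_below_cover_sums])
  fix b assume "b \<in> cover_sums \<phi> H n \<delta>"
  then obtain E where E: "finite E" "(\<Union>x\<in>E. bowen_ball \<phi> n x \<delta>) = UNIV"
    and b: "b = (\<Sum>x\<in>E. exp (H n x))"
    unfolding cover_sums_def by blast
  have "UNIV = \<tau> ` (\<Union>x\<in>E. bowen_ball \<phi> n x \<delta>)"
    using \<open>bij \<tau>\<close> E(2) by (simp add: bij_is_surj)
  also have "\<dots> \<subseteq> (\<Union>x\<in>\<tau> ` E. bowen_ball \<phi> n x \<epsilon>)" using maps by blast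
  finally have "(\<Union>x\<in>\<tau> ` E. bowen_ball \<phi> n x \<epsilon>) = UNIV" by blast
  moreover have "(\<Sum>x\<in>\<tau> ` E. exp (G n x)) = b"
    unfolding b H using sum.reindex[OF inj_on_subset[OF bij_is_inj[OF \<open>bij \<tau>\<close>]]] by simp
  ultimately show "\<exists>a\<in>cover_sums \<phi> G n \<epsilon>. a \<le> b"
    using E(1) unfolding cover_sums_def by blast
qed

definition pressure_at :: "('a::metric_space \<Rightarrow> 'a) \<Rightarrow> (nat \<Rightarrow> 'a \<Rightarrow> real) \<Rightarrow> real \<Rightarrow> ereal"
  where "pressure_at \<phi> G \<epsilon> = limsup (\<lambda>n. ereal (ln (pressure_cover \<phi> G n \<epsilon>) / real n))"

lemma pressure_at_mono:
  assumes cpt: "compact (UNIV :: 'a::metric_space set)" and cont: "continuous_on UNIV \<phi>"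
    and "0 < \<epsilon>" and bd: "\<And>n. bounded (range (G n))"
    and le: "\<And>n. pressure_cover \<phi> G n \<epsilon> \<le> pressure_cover \<phi> H n \<delta>"
  shows "pressure_at \<phi> (G :: nat \<Rightarrow> 'a \<Rightarrow> real) \<epsilon> \<le> pressure_at \<phi> H \<delta>"
  unfolding pressure_at_def
proof (intro Limsup_mono always_eventually allI)
  fix n
  have "ln (pressure_cover \<phi> G n \<epsilon>) \<le> ln (pressure_cover \<phi> H n \<delta>)"
    using le[of n] pressure_cover_pos[where G=G and n=n, OF cpt cont \<open>0 < \<epsilon>\<close> bd] by (rule ln_mono)
  then show "ereal (ln (pressure_cover \<phi> G n \<epsilon>) / real n)
      \<le> ereal (ln (pressure_cover \<phi> H n \<delta>) / real n)"
    by (simp add: divide_right_mono)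
qed

lemma pressure_at_antimono:
  assumes cpt: "compact (UNIV :: 'a::metric_space set)" and cont: "continuous_on UNIV \<phi>"
    and "0 < \<epsilon>" "\<epsilon> \<le> \<epsilon>'" and bd: "\<And>n. bounded (range (G n))"
  shows "pressure_at \<phi> (G :: nat \<Rightarrow> 'a \<Rightarrow> real) \<epsilon>' \<le> pressure_at \<phi> G \<epsilon>"
proof (rule pressure_at_mono[OF cpt cont _ bd])
  show "0 < \<epsilon>'" using assms by linarith
  fix n
  show "pressure_cover \<phi> G n \<epsilon>' \<le> pressure_cover \<phi> G n \<epsilon>"
    using bowen_ball_mono[OF \<open>\<epsilon> \<le> \<epsilon>'\<close>]
    by (intro pressure_cover_le_transport[OF cpt cont \<open>0 < \<epsilon>\<close>, where \<tau>=id]) simp_all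
qed

lemma top_pressure_eq_SUP:
  assumes cpt: "compact (UNIV :: 'a::metric_space set)" and cont: "continuous_on UNIV \<phi>"
    and bd: "\<And>n. bounded (range (G n))"
  shows "top_pressure \<phi> (G :: nat \<Rightarrow> 'a \<Rightarrow> real) = (SUP \<epsilon>\<in>{0<..}. pressure_at \<phi> G \<epsilon>)"
proof -
  let ?L = "SUP \<epsilon>\<in>{0<..}. pressure_at \<phi> G \<epsilon>"
  have "(pressure_at \<phi> G \<longlongrightarrow> ?L) (at_right 0)"
  proof (rule order_tendstoI)
    fix a assume "a < ?L"
    then obtain \<epsilon>0 where "0 < \<epsilon>0" "a < pressure_at \<phi> G \<epsilon>0" by (auto simp: less_SUP_iff)
    then show "eventually (\<lambda>\<epsilon>. a < pressure_at \<phi> G \<epsilon>) (at_right 0)"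
      unfolding eventually_at_right_field
    proof (intro exI[of _ \<epsilon>0] conjI allI impI)
      fix \<epsilon> :: real assume "0 < \<epsilon>" "\<epsilon> < \<epsilon>0"
      then have "pressure_at \<phi> G \<epsilon>0 \<le> pressure_at \<phi> G \<epsilon>"
        by (intro pressure_at_antimono[OF cpt cont _ _ bd]) simp_all
      with \<open>a < pressure_at \<phi> G \<epsilon>0\<close> show "a < pressure_at \<phi> G \<epsilon>" by simp
    qed simp
  next
    fix a assume "?L < a"
    show "eventually (\<lambda>\<epsilon>. pressure_at \<phi> G \<epsilon> < a) (at_right 0)"
      unfolding eventually_at_right_field
    proof (intro exI[of _ 1] conjI allI impI)
      fix \<epsilon> :: real assume "0 < \<epsilon>"
      then have "pressure_at \<phi> G \<epsilon> \<le> ?L" by (intro SUP_upper) simp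
      with \<open>?L < a\<close> show "pressure_at \<phi> G \<epsilon> < a" by simp
    qed simp
  qed
  then show ?thesis
    unfolding top_pressure_def pressure_at_def[symmetric] by (intro tendsto_Lim) auto
qed

subsection \<open>Transport of the pressure\<close>

definition bowen_equicontinuous :: "('a::metric_space \<Rightarrow> 'a) \<Rightarrow> (nat \<Rightarrow> 'a \<Rightarrow> 'a) \<Rightarrow> bool"
  where "bowen_equicontinuous \<phi> \<tau> \<longleftrightarrow>
    (\<forall>\<epsilon>>0. \<exists>\<delta>>0. \<forall>n x. \<tau> n ` bowen_ball \<phi> n x \<delta> \<subseteq> bowen_ball \<phi> n (\<tau> n x) \<epsilon>)"

lemma bowen_equicontinuous_reindexed:
  assumes uc: "uniformly_continuous_on UNIV \<theta>"
    and shift: "\<And>n k x. k < n \<Longrightarrow> (\<phi> ^^ k) (\<tau> n x) = \<theta> ((\<phi> ^^ j n k) x)"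
    and j: "\<And>n k. k < n \<Longrightarrow> j n k < n"
  shows "bowen_equicontinuous \<phi> \<tau>"
  unfolding bowen_equicontinuous_def
proof (intro allI impI)
  fix \<epsilon> :: real assume "0 < \<epsilon>"
  then obtain \<delta> where "0 < \<delta>" and \<delta>: "\<And>x x'. dist x' x < \<delta> \<Longrightarrow> dist (\<theta> x') (\<theta> x) < \<epsilon>"
    using uc unfolding uniformly_continuous_on_def by (metis UNIV_I)
  have "\<tau> n ` bowen_ball \<phi> n x \<delta> \<subseteq> bowen_ball \<phi> n (\<tau> n x) \<epsilon>" for n x
  proof (intro subsetI, elim imageE)
    fix y z assume z: "z \<in> bowen_ball \<phi> n x \<delta>" and y: "y = \<tau> n z"
    have "dist ((\<phi> ^^ k) (\<tau> n z)) ((\<phi> ^^ k) (\<tau> n x)) < \<epsilon>" if "k < n" for k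
    proof -
      have "dist ((\<phi> ^^ j n k) z) ((\<phi> ^^ j n k) x) < \<delta>"
        using z j[OF that] unfolding bowen_ball_def by blast
      then show ?thesis unfolding shift[OF that] by (rule \<delta>)
    qed
    then show "y \<in> bowen_ball \<phi> n (\<tau> n x) \<epsilon>" unfolding y bowen_ball_def by blast
  qed
  then show "\<exists>\<delta>>0. \<forall>n x. \<tau> n ` bowen_ball \<phi> n x \<delta> \<subseteq> bowen_ball \<phi> n (\<tau> n x) \<epsilon>"
    using \<open>0 < \<delta>\<close> by blast
qed

lemma top_pressure_le_compose:
  fixes G :: "nat \<Rightarrow> 'a::metric_space \<Rightarrow> real"
  assumes cpt: "compact (UNIV :: 'a set)" and cont: "continuous_on UNIV \<phi>"
    and bd: "\<And>n. bounded (range (G n))" and bij: "\<And>n. bij (\<tau> n)"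
    and equi: "bowen_equicontinuous \<phi> \<tau>"
  shows "top_pressure \<phi> G \<le> top_pressure \<phi> (\<lambda>n. G n \<circ> \<tau> n)"
proof -
  have bd': "bounded (range (G n \<circ> \<tau> n))" for n by (rule bounded_subset[OF bd]) auto
  show ?thesis
    unfolding top_pressure_eq_SUP[OF cpt cont bd] top_pressure_eq_SUP[OF cpt cont bd']
  proof (rule SUP_least)
    fix \<epsilon> :: real assume "\<epsilon> \<in> {0<..}"
    then have "\<exists>\<delta>>0. \<forall>n x. \<tau> n ` bowen_ball \<phi> n x \<delta> \<subseteq> bowen_ball \<phi> n (\<tau> n x) \<epsilon>"
      using equi unfolding bowen_equicontinuous_def by simp
    then obtain \<delta> where "0 < \<delta>" and \<delta>: "\<And>n x. \<tau> n ` bowen_ball \<phi> n x \<delta> \<subseteq> bowen_ball \<phi> n (\<tau> n x) \<epsilon>"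
      by blast
    have "pressure_at \<phi> G \<epsilon> \<le> pressure_at \<phi> (\<lambda>n. G n \<circ> \<tau> n) \<delta>"
    proof (rule pressure_at_mono[OF cpt cont _ bd])
      show "0 < \<epsilon>" using \<open>\<epsilon> \<in> {0<..}\<close> by simp
      show "pressure_cover \<phi> G n \<epsilon> \<le> pressure_cover \<phi> (\<lambda>n. G n \<circ> \<tau> n) n \<delta>" for n
        by (rule pressure_cover_le_transport[OF cpt cont \<open>0 < \<delta>\<close> bij _ \<delta>]) simp
    qed
    then show "pressure_at \<phi> G \<epsilon> \<le> (SUP \<epsilon>\<in>{0<..}. pressure_at \<phi> (\<lambda>n. G n \<circ> \<tau> n) \<epsilon>)"
      by (rule SUP_upper2[rotated]) (simp add: \<open>0 < \<delta>\<close>)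
  qed
qed

lemma top_pressure_compose_eq:
  fixes G :: "nat \<Rightarrow> 'a::metric_space \<Rightarrow> real"
  assumes cpt: "compact (UNIV :: 'a set)" and cont: "continuous_on UNIV \<phi>"
    and bd: "\<And>n. bounded (range (G n))"
    and inv1: "\<And>n x. \<tau> n (\<sigma> n x) = x" and inv2: "\<And>n x. \<sigma> n (\<tau> n x) = x"
    and "bowen_equicontinuous \<phi> \<tau>" and "bowen_equicontinuous \<phi> \<sigma>"
  shows "top_pressure \<phi> (\<lambda>n. G n \<circ> \<tau> n) = top_pressure \<phi> G"
proof (rule antisym)
  have bij_\<tau>: "bij (\<tau> n)" and bij_\<sigma>: "bij (\<sigma> n)" for n
    by (rule o_bij[where g="\<sigma> n"] o_bij[where g="\<tau> n"]; simp add: fun_eq_iff inv1 inv2)+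
  have bd': "bounded (range (G n \<circ> \<tau> n))" for n by (rule bounded_subset[OF bd]) auto
  have "top_pressure \<phi> (\<lambda>n. G n \<circ> \<tau> n) \<le> top_pressure \<phi> (\<lambda>n. (G n \<circ> \<tau> n) \<circ> \<sigma> n)"
    by (rule top_pressure_le_compose[OF cpt cont bd' bij_\<sigma>]) fact
  also have "(\<lambda>n. (G n \<circ> \<tau> n) \<circ> \<sigma> n) = G" by (simp add: fun_eq_iff inv1)
  finally show "top_pressure \<phi> (\<lambda>n. G n \<circ> \<tau> n) \<le> top_pressure \<phi> G" .
  show "top_pressure \<phi> G \<le> top_pressure \<phi> (\<lambda>n. G n \<circ> \<tau> n)"
    by (rule top_pressure_le_compose[OF cpt cont bd bij_\<tau>]) fact
qed

subsection \<open>Transport of the entropy\<close>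

lemma part_entropy_vimage:
  assumes "surj f" and "\<And>A. measure Q' A = measure Q (f -` A)"
  shows "part_entropy Q' S = part_entropy Q ((\<lambda>A. f -` A) ` S)"
proof -
  have inj: "inj_on (\<lambda>A. f -` A) S"
    by (rule inj_onI) (metis assms(1) surj_image_vimage_eq)
  show ?thesis
    unfolding part_entropy_def sum.reindex[OF inj] o_def assms(2)[symmetric] by (rule refl)
qed

lemma measure_distr_homeomorphism:
  assumes sQ: "sets Q = sets borel" and f: "homeomorphism UNIV UNIV f g"
  shows "measure (distr Q borel f) A = measure Q (f -` A)"
proof (cases "A \<in> sets borel")
  case True
  have "f \<in> borel_measurable borel"
    using f by (intro borel_measurable_continuous_onI) (simp add: homeomorphism_def)
  then have f_meas: "f \<in> measurable Q borel" using measurable_cong_sets[OF sQ refl] by blast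
  show ?thesis using measure_distr[OF f_meas True] sets_eq_imp_space_eq[OF sQ] by simp
next
  case False
  have "g \<in> borel_measurable borel"
    using f by (intro borel_measurable_continuous_onI) (simp add: homeomorphism_def)
  moreover have "g -` (f -` A) = A" using f by (auto simp: homeomorphism_def)
  ultimately have "f -` A \<notin> sets borel"
    using False measurable_sets[of g borel borel "f -` A"] by auto
  then show ?thesis using False sQ by (simp add: measure_notin_sets)
qed

lemma measure_vimage_invariant:
  assumes "Q \<in> invariant_measures \<phi>" and "homeomorphism UNIV UNIV \<phi> \<psi>"
  shows "measure Q (\<phi> -` A) = measure Q A"
proof -
  have "sets Q = sets borel" and "distr Q borel \<phi> = Q"
    using assms(1) unfolding invariant_measures_def by auto
  then show ?thesis using measure_distr_homeomorphism[OF _ assms(2), of Q A] by simp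
qed

lemma measure_funpow_vimage_invariant:
  assumes "Q \<in> invariant_measures \<phi>" and "homeomorphism UNIV UNIV \<phi> \<psi>"
  shows "measure Q ((\<phi> ^^ m) -` A) = measure Q A"
proof (induction m)
  case (Suc m)
  have "measure Q ((\<phi> ^^ Suc m) -` A) = measure Q (\<phi> -` ((\<phi> ^^ m) -` A))"
    by (simp only: funpow_Suc_right vimage_comp)
  also have "\<dots> = measure Q ((\<phi> ^^ m) -` A)" by (rule measure_vimage_invariant[OF assms])
  also note Suc.IH
  finally show ?case .
qed simp

lemma vimage_fin_partition:
  assumes sQ: "sets Q = sets borel" and f: "f \<in> borel_measurable borel"
    and "P \<in> fin_partitions Q"
  shows "(\<lambda>A. f -` A) ` P \<in> fin_partitions Q"
proof -
  have space: "space Q = UNIV" using sets_eq_imp_space_eq[OF sQ] by simp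
  have P: "finite P" "P \<subseteq> sets borel" "disjoint P" "\<Union>P = UNIV"
    using \<open>P \<in> fin_partitions Q\<close> unfolding fin_partitions_def sQ space by simp_all
  have "(\<lambda>A. f -` A) ` P \<subseteq> sets borel" using P(2) measurable_sets[OF f] by auto
  moreover have "disjoint ((\<lambda>A. f -` A) ` P)"
  proof (rule pairwise_imageI)
    fix A B assume "A \<in> P" "B \<in> P" "A \<noteq> B"
    with P(3) have "disjnt A B" by (auto dest: pairwiseD)
    then show "disjnt (f -` A) (f -` B)" by (auto simp: disjnt_def)
  qed
  moreover have "\<Union>((\<lambda>A. f -` A) ` P) = UNIV" using P(4) by auto
  ultimately show ?thesis using P(1) unfolding fin_partitions_def sQ space by simp
qed

lemma dyn_join_vimage_involution:
  assumes conj: "\<And>k x. (\<phi> ^^ k) (\<theta> x) = \<theta> ((\<psi> ^^ k) x)" and invo: "\<And>x. \<theta> (\<theta> x) = x"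
  shows "(\<lambda>A. \<theta> -` A) ` dyn_join \<phi> P n = dyn_join \<psi> ((\<lambda>A. \<theta> -` A) ` P) n"
proof -
  have vimage_join: "\<theta> -` (\<Inter>k<n. (\<phi> ^^ k) -` A k) = (\<Inter>k<n. (\<psi> ^^ k) -` (\<theta> -` A k))" for A
    by (auto simp: conj)
  have vimage_vimage: "\<theta> -` (\<theta> -` C) = C" for C by (auto simp: invo)
  show ?thesis
  proof (intro equalityI subsetI)
    fix X assume "X \<in> (\<lambda>A. \<theta> -` A) ` dyn_join \<phi> P n"
    then obtain Y where "Y \<in> dyn_join \<phi> P n" and X: "X = \<theta> -` Y" by blast
    then obtain A where A: "\<forall>k<n. A k \<in> P" "Y = (\<Inter>k<n. (\<phi> ^^ k) -` A k)"
      unfolding dyn_join_def by blast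
    then show "X \<in> dyn_join \<psi> ((\<lambda>A. \<theta> -` A) ` P) n"
      unfolding dyn_join_def X A(2) vimage_join
      by (intro CollectI exI[of _ "\<lambda>k. \<theta> -` A k"]) simp
  next
    fix X assume "X \<in> dyn_join \<psi> ((\<lambda>A. \<theta> -` A) ` P) n"
    then obtain B where B: "\<forall>k<n. B k \<in> (\<lambda>A. \<theta> -` A) ` P" "X = (\<Inter>k<n. (\<psi> ^^ k) -` B k)"
      unfolding dyn_join_def by blast
    have "X = \<theta> -` (\<Inter>k<n. (\<phi> ^^ k) -` (\<theta> -` B k))"
      unfolding vimage_join vimage_vimage B(2) ..
    moreover have "(\<Inter>k<n. (\<phi> ^^ k) -` (\<theta> -` B k)) \<in> dyn_join \<phi> P n"
      unfolding dyn_join_def using B(1) vimage_vimage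
      by (intro CollectI exI[of _ "\<lambda>k. \<theta> -` B k"]) auto
    ultimately show "X \<in> (\<lambda>A. \<theta> -` A) ` dyn_join \<phi> P n"
      by (rule image_eqI)
  qed
qed

lemma dyn_join_reverse:
  assumes left_inv: "\<And>x. \<psi> (\<phi> x) = x"
  shows "dyn_join \<phi> P (Suc m) = (\<lambda>A. (\<phi> ^^ m) -` A) ` dyn_join \<psi> P (Suc m)"
proof -
  have reverse: "(\<forall>k\<le>m. R (m - k) k) \<longleftrightarrow> (\<forall>k\<le>m. R k (m - k))" for R :: "nat \<Rightarrow> nat \<Rightarrow> bool"
    by (metis diff_diff_cancel diff_le_self)
  have vimage_join:
    "(\<phi> ^^ m) -` (\<Inter>k<Suc m. (\<psi> ^^ k) -` A k) = (\<Inter>k<Suc m. (\<phi> ^^ k) -` A (m - k))" for A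
  proof (rule set_eqI)
    fix x
    have "x \<in> (\<phi> ^^ m) -` (\<Inter>k<Suc m. (\<psi> ^^ k) -` A k) \<longleftrightarrow> (\<forall>k\<le>m. (\<phi> ^^ (m - k)) x \<in> A k)"
      by (auto simp: less_Suc_eq_le funpow_left_inverse_cancel[where g=\<psi> and f=\<phi>, OF left_inv])
    also have "\<dots> \<longleftrightarrow> (\<forall>k\<le>m. (\<phi> ^^ k) x \<in> A (m - k))" by (rule reverse)
    finally show "x \<in> (\<phi> ^^ m) -` (\<Inter>k<Suc m. (\<psi> ^^ k) -` A k) \<longleftrightarrow>
        x \<in> (\<Inter>k<Suc m. (\<phi> ^^ k) -` A (m - k))"
      by (auto simp: lessThan_Suc_atMost)
  qed
  show ?thesis
  proof (intro equalityI subsetI)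
    fix X assume "X \<in> dyn_join \<phi> P (Suc m)"
    then obtain A where A: "\<forall>k<Suc m. A k \<in> P" "X = (\<Inter>k<Suc m. (\<phi> ^^ k) -` A k)"
      unfolding dyn_join_def by blast
    have "X = (\<Inter>k<Suc m. (\<phi> ^^ k) -` A (m - (m - k)))"
      unfolding A(2) by (intro INF_cong) auto
    then have "X = (\<phi> ^^ m) -` (\<Inter>k<Suc m. (\<psi> ^^ k) -` A (m - k))"
      unfolding vimage_join .
    moreover have "(\<Inter>k<Suc m. (\<psi> ^^ k) -` A (m - k)) \<in> dyn_join \<psi> P (Suc m)"
      unfolding dyn_join_def using A(1) by (intro CollectI exI[of _ "\<lambda>k. A (m - k)"]) simp
    ultimately show "X \<in> (\<lambda>A. (\<phi> ^^ m) -` A) ` dyn_join \<psi> P (Suc m)"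
      by (rule image_eqI)
  next
    fix X assume "X \<in> (\<lambda>A. (\<phi> ^^ m) -` A) ` dyn_join \<psi> P (Suc m)"
    then obtain Y where "Y \<in> dyn_join \<psi> P (Suc m)" and X: "X = (\<phi> ^^ m) -` Y" by blast
    then obtain A where A: "\<forall>k<Suc m. A k \<in> P" "Y = (\<Inter>k<Suc m. (\<psi> ^^ k) -` A k)"
      unfolding dyn_join_def by blast
    then show "X \<in> dyn_join \<phi> P (Suc m)"
      unfolding dyn_join_def X A(2) vimage_join by (intro CollectI exI[of _ "\<lambda>k. A (m - k)"]) simp
  qed
qed

lemma part_entropy_dyn_join_inverse:
  assumes Q: "Q \<in> invariant_measures \<phi>" and \<phi>: "homeomorphism UNIV UNIV \<phi> \<psi>"
  shows "part_entropy Q (dyn_join \<psi> P n) = part_entropy Q (dyn_join \<phi> P n)"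
proof (cases n)
  case 0
  then show ?thesis by (simp add: dyn_join_def)
next
  case (Suc m)
  have left_inv: "\<psi> (\<phi> x) = x" and right_inv: "\<phi> (\<psi> x) = x" for x
    using \<phi> unfolding homeomorphism_def by simp_all
  have "surj (\<phi> ^^ m)"
    by (rule surjI[of "\<phi> ^^ m" "\<psi> ^^ m"]) (simp add: funpow_left_inverse_cancel[where g=\<phi> and f=\<psi>, OF right_inv])
  then have "part_entropy Q (dyn_join \<psi> P n) = part_entropy Q ((\<lambda>A. (\<phi> ^^ m) -` A) ` dyn_join \<psi> P n)"
    by (rule part_entropy_vimage) (simp add: measure_funpow_vimage_invariant[OF Q \<phi>])
  also have "\<dots> = part_entropy Q (dyn_join \<phi> P n)"
    unfolding Suc dyn_join_reverse[where \<phi>=\<phi> and \<psi>=\<psi>, OF left_inv] ..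
  finally show ?thesis .
qed

lemma ks_entropy_distr_involution:
  fixes \<phi> \<psi> \<theta> :: "'a::topological_space \<Rightarrow> 'a"
  assumes sQ: "sets Q = sets borel" and \<theta>: "homeomorphism UNIV UNIV \<theta> \<theta>"
    and conj: "\<And>k x. (\<phi> ^^ k) (\<theta> x) = \<theta> ((\<psi> ^^ k) x)"
    and same: "\<And>P n. part_entropy Q (dyn_join \<psi> P n) = part_entropy Q (dyn_join \<phi> P n)"
  shows "ks_entropy \<phi> (distr Q borel \<theta>) = ks_entropy \<phi> Q"
proof -
  define T where "T = (\<lambda>S. (\<lambda>A. \<theta> -` A) ` (S :: 'a set set))"
  have invo: "\<theta> (\<theta> x) = x" for x using \<theta> unfolding homeomorphism_def by simp
  have TT: "T (T S) = S" for S
  proof -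
    have "\<theta> -` (\<theta> -` A) = A" for A by (auto simp: invo)
    then show ?thesis unfolding T_def image_image by simp
  qed
  have "\<theta> \<in> borel_measurable borel"
    using \<theta> by (intro borel_measurable_continuous_onI) (simp add: homeomorphism_def)
  then have T_into: "T ` fin_partitions Q \<subseteq> fin_partitions Q"
    unfolding T_def using vimage_fin_partition[OF sQ] by blast
  have T_onto: "T ` fin_partitions Q = fin_partitions Q"
  proof (rule equalityI[OF T_into subsetI])
    fix P assume "P \<in> fin_partitions Q"
    with T_into have "T P \<in> fin_partitions Q" by blast
    then show "P \<in> T ` fin_partitions Q" using TT[of P] by (metis image_eqI)
  qed
  have same_partitions: "fin_partitions (distr Q borel \<theta>) = fin_partitions Q"
    unfolding fin_partitions_def by (simp add: sQ sets_eq_imp_space_eq[OF sQ])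
  have "surj \<theta>" using \<theta> unfolding homeomorphism_def by simp
  have pull_back: "part_entropy (distr Q borel \<theta>) (dyn_join \<phi> (T P) n) = part_entropy Q (dyn_join \<phi> P n)"
    for P n
  proof -
    have "part_entropy (distr Q borel \<theta>) (dyn_join \<phi> (T P) n) = part_entropy Q (T (dyn_join \<phi> (T P) n))"
      unfolding T_def by (rule part_entropy_vimage[OF \<open>surj \<theta>\<close> measure_distr_homeomorphism[OF sQ \<theta>]])
    also have "T (dyn_join \<phi> (T P) n) = dyn_join \<psi> (T (T P)) n"
      unfolding T_def by (rule dyn_join_vimage_involution[OF conj invo])
    finally show ?thesis by (simp add: TT same)
  qed
  have "ks_entropy \<phi> (distr Q borel \<theta>) =
      (SUP P\<in>T ` fin_partitions Q. ereal (lim (\<lambda>n. part_entropy (distr Q borel \<theta>) (dyn_join \<phi> P n) / real n)))"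
    unfolding ks_entropy_def same_partitions T_onto ..
  also have "\<dots> = ks_entropy \<phi> Q"
    unfolding image_image ks_entropy_def pull_back ..
  finally show ?thesis .
qed

subsection \<open>The two reversibility conditions\<close>

lemma ks_entropy_distr_commuting_involution:
  assumes "sets Q = sets borel" and \<theta>: "homeomorphism UNIV UNIV \<theta> \<theta>" and "\<phi> = \<theta> \<circ> \<phi> \<circ> \<theta>"
  shows "ks_entropy \<phi> (distr Q borel \<theta>) = ks_entropy \<phi> Q"
proof -
  have invo: "\<theta> (\<theta> x) = x" for x using \<theta> unfolding homeomorphism_def by simp
  have "(\<phi> ^^ k) (\<theta> x) = \<theta> ((\<phi> ^^ k) x)" for k x
    by (rule funpow_conjugate, rule involution_conjugate[OF invo \<open>\<phi> = \<theta> \<circ> \<phi> \<circ> \<theta>\<close>])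
  then show ?thesis by (rule ks_entropy_distr_involution[OF assms(1) \<theta>]) (rule refl)
qed

lemma ks_entropy_distr_reversing_involution:
  assumes Q: "Q \<in> invariant_measures \<phi>" and \<theta>: "homeomorphism UNIV UNIV \<theta> \<theta>"
    and \<phi>: "homeomorphism UNIV UNIV \<phi> \<psi>" and "\<psi> = \<theta> \<circ> \<phi> \<circ> \<theta>"
  shows "ks_entropy \<phi> (distr Q borel \<theta>) = ks_entropy \<phi> Q"
proof -
  have invo: "\<theta> (\<theta> x) = x" for x using \<theta> unfolding homeomorphism_def by simp
  have "sets Q = sets borel" using Q unfolding invariant_measures_def by simp
  moreover have "(\<phi> ^^ k) (\<theta> x) = \<theta> ((\<psi> ^^ k) x)" for k x
    by (rule funpow_conjugate, rule involution_conjugate[OF invo \<open>\<psi> = \<theta> \<circ> \<phi> \<circ> \<theta>\<close>])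
  ultimately show ?thesis
    by (rule ks_entropy_distr_involution[OF _ \<theta>]) (rule part_entropy_dyn_join_inverse[OF Q \<phi>])
qed

lemma top_pressure_commuting_involution:
  fixes G :: "nat \<Rightarrow> 'a::metric_space \<Rightarrow> real"
  assumes cpt: "compact (UNIV :: 'a set)" and cont: "continuous_on UNIV \<phi>"
    and \<theta>: "homeomorphism UNIV UNIV \<theta> \<theta>" and "\<phi> = \<theta> \<circ> \<phi> \<circ> \<theta>"
    and bd: "\<And>n. bounded (range (G n))"
  shows "top_pressure \<phi> (\<lambda>n. G n \<circ> \<theta>) = top_pressure \<phi> G"
proof -
  have invo: "\<theta> (\<theta> x) = x" for x using \<theta> unfolding homeomorphism_def by simp
  have "uniformly_continuous_on UNIV \<theta>"
    using \<theta> cpt by (intro compact_uniformly_continuous) (simp_all add: homeomorphism_def)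
  moreover have "(\<phi> ^^ k) (\<theta> x) = \<theta> ((\<phi> ^^ k) x)" for k x
    by (rule funpow_conjugate, rule involution_conjugate[OF invo \<open>\<phi> = \<theta> \<circ> \<phi> \<circ> \<theta>\<close>])
  ultimately have equi: "bowen_equicontinuous \<phi> (\<lambda>n. \<theta>)"
    by (rule bowen_equicontinuous_reindexed[where j="\<lambda>n k. k"])
  show ?thesis
    by (rule top_pressure_compose_eq[OF cpt cont bd _ _ equi equi]) (simp_all add: invo)
qed

lemma top_pressure_reversing_involution:
  fixes G :: "nat \<Rightarrow> 'a::metric_space \<Rightarrow> real"
  assumes cpt: "compact (UNIV :: 'a set)" and \<theta>: "homeomorphism UNIV UNIV \<theta> \<theta>"
    and \<phi>: "homeomorphism UNIV UNIV \<phi> \<psi>" and "\<psi> = \<theta> \<circ> \<phi> \<circ> \<theta>"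
    and bd: "\<And>n. bounded (range (G n))"
  shows "top_pressure \<phi> (\<lambda>n. G n \<circ> (\<theta> \<circ> \<phi> ^^ (n - 1))) = top_pressure \<phi> G"
proof -
  have invo: "\<theta> (\<theta> x) = x" for x using \<theta> unfolding homeomorphism_def by simp
  have left_inv: "\<psi> (\<phi> x) = x" and right_inv: "\<phi> (\<psi> x) = x" for x
    using \<phi> unfolding homeomorphism_def by simp_all
  have "\<phi> = \<theta> \<circ> \<psi> \<circ> \<theta>" using \<open>\<psi> = \<theta> \<circ> \<phi> \<circ> \<theta>\<close> by (simp add: fun_eq_iff invo)
  have conj: "(\<phi> ^^ k) (\<theta> x) = \<theta> ((\<psi> ^^ k) x)" for k x
    by (rule funpow_conjugate, rule involution_conjugate[OF invo \<open>\<psi> = \<theta> \<circ> \<phi> \<circ> \<theta>\<close>])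
  have conj': "(\<psi> ^^ k) (\<theta> x) = \<theta> ((\<phi> ^^ k) x)" for k x
    by (rule funpow_conjugate, rule involution_conjugate[OF invo \<open>\<phi> = \<theta> \<circ> \<psi> \<circ> \<theta>\<close>])
  have uc: "uniformly_continuous_on UNIV \<theta>"
    using \<theta> cpt by (intro compact_uniformly_continuous) (simp_all add: homeomorphism_def)
  define \<tau> where "\<tau> n = \<theta> \<circ> \<phi> ^^ (n - 1)" for n
  define \<sigma> where "\<sigma> n = \<psi> ^^ (n - 1) \<circ> \<theta>" for n
  have "\<tau> n (\<sigma> n x) = x" and "\<sigma> n (\<tau> n x) = x" for n x
    unfolding \<tau>_def \<sigma>_def
    using funpow_left_inverse_cancel[where g=\<phi> and f=\<psi>, OF right_inv, of "n - 1" "n - 1"]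
      funpow_left_inverse_cancel[where g=\<psi> and f=\<phi>, OF left_inv, of "n - 1" "n - 1"]
    by (simp_all add: invo)
  moreover have "bowen_equicontinuous \<phi> \<tau>"
  proof (rule bowen_equicontinuous_reindexed[OF uc, where j="\<lambda>n k. n - 1 - k"])
    fix n k :: nat and x assume "k < n"
    have "(\<phi> ^^ k) (\<tau> n x) = \<theta> ((\<psi> ^^ k) ((\<phi> ^^ (n - 1)) x))"
      unfolding \<tau>_def by (simp add: conj)
    also have "(\<psi> ^^ k) ((\<phi> ^^ (n - 1)) x) = (\<phi> ^^ (n - 1 - k)) x"
      using \<open>k < n\<close> by (intro funpow_left_inverse_cancel[where g=\<psi> and f=\<phi>, OF left_inv]) simp
    finally show "(\<phi> ^^ k) (\<tau> n x) = \<theta> ((\<phi> ^^ (n - 1 - k)) x)" .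
  qed simp
  moreover have "bowen_equicontinuous \<phi> \<sigma>"
  proof (rule bowen_equicontinuous_reindexed[OF uc, where j="\<lambda>n k. n - 1 - k"])
    fix n k :: nat and x assume "k < n"
    have "(\<phi> ^^ k) (\<sigma> n x) = (\<psi> ^^ (n - 1 - k)) (\<theta> x)"
      unfolding \<sigma>_def using \<open>k < n\<close>
      by (simp add: funpow_left_inverse_cancel[where g=\<phi> and f=\<psi>, OF right_inv])
    also have "\<dots> = \<theta> ((\<phi> ^^ (n - 1 - k)) x)" by (rule conj')
    finally show "(\<phi> ^^ k) (\<sigma> n x) = \<theta> ((\<phi> ^^ (n - 1 - k)) x)" .
  qed simp
  moreover have "continuous_on UNIV \<phi>" using \<phi> unfolding homeomorphism_def by simp
  ultimately show ?thesis
    unfolding \<tau>_def[symmetric] by (intro top_pressure_compose_eq[OF cpt _ bd])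
qed

theorem lemma3p7:
  fixes \<phi> \<theta> :: "'a::metric_space \<Rightarrow> 'a"
  assumes cpt: "compact (UNIV :: 'a set)"
    and cont: "continuous_on UNIV \<phi>"
    and inv: "homeomorphism UNIV UNIV \<theta> \<theta>"
    and CR: "\<phi> = \<theta> \<circ> \<phi> \<circ> \<theta> \<or> (\<exists>\<psi>. homeomorphism UNIV UNIV \<phi> \<psi> \<and> \<psi> = \<theta> \<circ> \<phi> \<circ> \<theta>)"
  shows "(\<forall>Q\<in>invariant_measures \<phi>. ks_entropy \<phi> (distr Q borel \<theta>) = ks_entropy \<phi> Q)
     \<and> (\<phi> = \<theta> \<circ> \<phi> \<circ> \<theta> \<longrightarrow>
           (\<forall>G\<in>approx_additive \<phi>. top_pressure \<phi> (\<lambda>n. G n \<circ> \<theta>) = top_pressure \<phi> G))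
     \<and> ((\<exists>\<psi>. homeomorphism UNIV UNIV \<phi> \<psi> \<and> \<psi> = \<theta> \<circ> \<phi> \<circ> \<theta>) \<longrightarrow>
           (\<forall>G\<in>approx_additive \<phi>.
              top_pressure \<phi> (\<lambda>n. G n \<circ> (\<theta> \<circ> \<phi> ^^ (n - 1))) = top_pressure \<phi> G))"
proof -
  have bounded: "\<And>n. bounded (range (G n))" if "G \<in> approx_additive \<phi>" for G
    using that unfolding approx_additive_def by auto
  have "ks_entropy \<phi> (distr Q borel \<theta>) = ks_entropy \<phi> Q" if Q: "Q \<in> invariant_measures \<phi>" for Q
    using CR
  proof
    assume "\<phi> = \<theta> \<circ> \<phi> \<circ> \<theta>"
    moreover have "sets Q = sets borel" using Q unfolding invariant_measures_def by simp
    ultimately show ?thesis using ks_entropy_distr_commuting_involution[OF _ inv] by blast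
  next
    assume "\<exists>\<psi>. homeomorphism UNIV UNIV \<phi> \<psi> \<and> \<psi> = \<theta> \<circ> \<phi> \<circ> \<theta>"
    then show ?thesis using ks_entropy_distr_reversing_involution[OF Q inv] by blast
  qed
  moreover have "top_pressure \<phi> (\<lambda>n. G n \<circ> \<theta>) = top_pressure \<phi> G"
    if "\<phi> = \<theta> \<circ> \<phi> \<circ> \<theta>" and "G \<in> approx_additive \<phi>" for G
    by (rule top_pressure_commuting_involution[OF cpt cont inv that(1)]) (rule bounded[OF that(2)])
  moreover have "top_pressure \<phi> (\<lambda>n. G n \<circ> (\<theta> \<circ> \<phi> ^^ (n - 1))) = top_pressure \<phi> G"
    if R: "\<exists>\<psi>. homeomorphism UNIV UNIV \<phi> \<psi> \<and> \<psi> = \<theta> \<circ> \<phi> \<circ> \<theta>" and G: "G \<in> approx_additive \<phi>" for G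
  proof -
    obtain \<psi> where "homeomorphism UNIV UNIV \<phi> \<psi>" "\<psi> = \<theta> \<circ> \<phi> \<circ> \<theta>" using R by blast
    then show ?thesis
      by (rule top_pressure_reversing_involution[OF cpt inv]) (rule bounded[OF G])
  qed
  ultimately show ?thesis by blast
qed

end
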